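(* For every integer $n>1$, \[ \mathrm{DE3}(n+2)+\mathrm{DE3}(n-1) = \mathrm{DE1}(n)+\mathrm{DE1}(n-1). \]
   Context: For a nonnegative integer $n$, $\mathrm{DE1}(n)$ denotes the number of partitions of $n$ in which no even part is repeated and the largest part is odd, and $\mathrm{DE3}(n)$ denotes the number of partitions of $n$ in which no even part is repeated and the largest part is odd and appears exactly once. In both cases the empty partition is not counted, so $\mathrm{DE1}(0)=\mathrm{DE3}(0)=0$. *)

theory Defs
  imports Main "HOL-Library.Multiset"
begin

definition partitions_of :: "nat \<Rightarrow> nat multiset set" where
  "partitions_of n = {P. (\<forall>x\<in>#P. x > 0) \<and> sum_mset P = n}"

definition no_even_repeated :: "nat multiset \<Rightarrow> bool" where
  "no_even_repeated P \<longleftrightarrow> (\<forall>x. even x \<longrightarrow> count P x \<le> 1)"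

definition DE1 :: "nat \<Rightarrow> nat" where
  "DE1 n = card {P \<in> partitions_of n. P \<noteq> {#} \<and> no_even_repeated P \<and> odd (Max_mset P)}"

definition DE3 :: "nat \<Rightarrow> nat" where
  "DE3 n = card {P \<in> partitions_of n. P \<noteq> {#} \<and> no_even_repeated P \<and> odd (Max_mset P)
                    \<and> count P (Max_mset P) = 1}"

end

(*
  A partition counted by DE1 consists of its odd largest part m and a partition of the rest
  into parts at most m with no even part repeated. Let Q be counted by DE3(n + 2), with
  largest part M. If M - 1 is not a part of Q, lowering M to M - 2 is a bijection onto the
  partitions counted by DE1(n). If M - 1 is a part, it is even and hence occurs once, and
  replacing the parts M, M - 1 by M - 2, M - 2 is a bijection onto the partitions counted by
  DE1(n - 1) whose largest part is repeated; there are DE1(n - 1) - DE3(n - 1) of those.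
  In both cases the two sides are parametrised by the same pairs (m, R) of an odd top part
  m and the multiset R of parts below it.
*)
theory Submission
  imports Defs
begin

definition bounded_de_partitions :: "nat \<Rightarrow> nat \<Rightarrow> nat multiset set" where
  "bounded_de_partitions m k = {R \<in> partitions_of k. no_even_repeated R \<and> (\<forall>x\<in>#R. x \<le> m)}"

definition de1_partitions :: "nat \<Rightarrow> nat multiset set" where
  "de1_partitions k = {P \<in> partitions_of k. P \<noteq> {#} \<and> no_even_repeated P \<and> odd (Max_mset P)}"

definition odd_top_splits :: "nat \<Rightarrow> (nat \<times> nat multiset) set" where
  "odd_top_splits k = {(m, R). odd m \<and> m \<le> k \<and> R \<in> bounded_de_partitions m (k - m)}"

definition odd_pair_splits :: "nat \<Rightarrow> (nat \<times> nat multiset) set" where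
  "odd_pair_splits k = {(m, R). odd m \<and> 2 * m \<le> k \<and> R \<in> bounded_de_partitions m (k - 2 * m)}"

lemma Max_mset_add_mset_upper:
  fixes c :: "'a::linorder"
  assumes "\<forall>x\<in>#R. x \<le> c"
  shows "Max_mset (add_mset c R) = c"
  using assms by (intro Max_eqI) auto

lemma add_mset_upper_eq_iff:
  fixes a a' :: "'a::linorder"
  assumes "\<forall>x\<in>#R. x \<le> a" and "\<forall>x\<in>#R'. x \<le> a'"
  shows "add_mset a R = add_mset a' R' \<longleftrightarrow> a = a' \<and> R = R'"
proof
  assume eq: "add_mset a R = add_mset a' R'"
  then have "a = a'"
    using Max_mset_add_mset_upper[OF assms(1)] Max_mset_add_mset_upper[OF assms(2)] by simp
  with eq show "a = a' \<and> R = R'" by simp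
qed simp

lemma inj_on_add_mset_upper:
  fixes f :: "'b \<Rightarrow> 'a::linorder" and F :: "'b \<Rightarrow> 'c \<Rightarrow> 'a multiset"
  assumes "\<And>m R. (m, R) \<in> S \<Longrightarrow> \<forall>x\<in>#F m R. x \<le> f m"
    and "inj f" and "\<And>m. inj (F m)"
  shows "inj_on (\<lambda>(m, R). add_mset (f m) (F m R)) S"
proof (rule inj_onI, clarify)
  fix m R m' R'
  assume "(m, R) \<in> S" "(m', R') \<in> S" "add_mset (f m) (F m R) = add_mset (f m') (F m' R')"
  then have "f m = f m'" "F m R = F m' R'"
    using assms(1) add_mset_upper_eq_iff by blast+
  then show "m = m' \<and> R = R'"
    using assms(2,3) by (auto dest: injD)
qed

lemma Max_mset_splitE:
  fixes P :: "'a::linorder multiset"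
  assumes "P \<noteq> {#}"
  obtains R where "P = add_mset (Max_mset P) R" and "\<forall>x\<in>#R. x \<le> Max_mset P"
proof
  show "P = add_mset (Max_mset P) (P - {#Max_mset P#})"
    using assms by simp
  show "\<forall>x\<in>#P - {#Max_mset P#}. x \<le> Max_mset P"
    by (auto dest: in_diffD)
qed

lemma no_even_repeated_add_mset_iff:
  "no_even_repeated (add_mset c R) \<longleftrightarrow> no_even_repeated R \<and> (even c \<longrightarrow> c \<notin># R)"
proof -
  have "count R x \<le> 1 \<and> (x = c \<longrightarrow> c \<notin># R) \<longleftrightarrow> count (add_mset c R) x \<le> 1" for x
    by (auto simp: not_in_iff)
  then show ?thesis
    unfolding no_even_repeated_def by blast
qed

lemma add_mset_in_partitions_of_iff:
  "add_mset c R \<in> partitions_of k \<longleftrightarrow> 0 < c \<and> c \<le> k \<and> R \<in> partitions_of (k - c)"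
  unfolding partitions_of_def by auto

lemma add_mset_in_bounded_de_partitions_iff:
  "add_mset c R \<in> bounded_de_partitions m k \<longleftrightarrow>
     0 < c \<and> c \<le> m \<and> c \<le> k \<and> (even c \<longrightarrow> c \<notin># R) \<and> R \<in> bounded_de_partitions m (k - c)"
  unfolding bounded_de_partitions_def
  by (auto simp: add_mset_in_partitions_of_iff no_even_repeated_add_mset_iff)

lemma bounded_de_partitions_mono:
  "R \<in> bounded_de_partitions m k \<Longrightarrow> m \<le> m' \<Longrightarrow> R \<in> bounded_de_partitions m' k"
  unfolding bounded_de_partitions_def by auto

lemma bounded_de_partitions_drop_bound:
  "R \<in> bounded_de_partitions m k \<Longrightarrow> m \<notin># R \<Longrightarrow> R \<in> bounded_de_partitions (m - 1) k"
  unfolding bounded_de_partitions_def by (fastforce simp: le_eq_less_or_eq)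

lemma bounded_de_partitions_0D: "R \<in> bounded_de_partitions 0 k \<Longrightarrow> R = {#} \<and> k = 0"
  unfolding bounded_de_partitions_def partitions_of_def by (cases R) auto

lemma odd_top_splits_bound: "(m, R) \<in> odd_top_splits k \<Longrightarrow> \<forall>x\<in>#R. x \<le> m"
  unfolding odd_top_splits_def bounded_de_partitions_def by simp

lemma odd_pair_splits_bound: "(m, R) \<in> odd_pair_splits k \<Longrightarrow> \<forall>x\<in>#R. x \<le> m"
  unfolding odd_pair_splits_def bounded_de_partitions_def by simp

lemma DE1_eq_card: "DE1 k = card (de1_partitions k)"
  unfolding DE1_def de1_partitions_def ..

lemma DE3_eq_card: "DE3 k = card {P \<in> de1_partitions k. count P (Max_mset P) = 1}"
  unfolding DE3_def de1_partitions_def by simp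

lemma add_mset_in_de1_partitions_iff:
  assumes "\<forall>x\<in>#R. x \<le> m"
  shows "add_mset m R \<in> de1_partitions k \<longleftrightarrow>
           odd m \<and> m \<le> k \<and> R \<in> bounded_de_partitions m (k - m)"
  using Max_mset_add_mset_upper[OF assms] assms
  by (auto simp: de1_partitions_def bounded_de_partitions_def add_mset_in_partitions_of_iff
      no_even_repeated_add_mset_iff intro: odd_pos)

lemma de1_partitions_splitE:
  assumes "P \<in> de1_partitions k"
  obtains R where "P = add_mset (Max_mset P) R" and "odd (Max_mset P)" and "Max_mset P \<le> k"
    and "R \<in> bounded_de_partitions (Max_mset P) (k - Max_mset P)"
proof -
  obtain R where R: "P = add_mset (Max_mset P) R" "\<forall>x\<in>#R. x \<le> Max_mset P"
    using assms Max_mset_splitE unfolding de1_partitions_def by blast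
  with assms add_mset_in_de1_partitions_iff[OF R(2)] show thesis
    by (intro that) auto
qed

lemma de1_partitions_eq_image:
  "de1_partitions k = (\<lambda>(m, R). add_mset m R) ` odd_top_splits k"
proof (intro set_eqI iffI)
  fix P assume "P \<in> de1_partitions k"
  then obtain R where "P = add_mset (Max_mset P) R" "odd (Max_mset P)" "Max_mset P \<le> k"
    "R \<in> bounded_de_partitions (Max_mset P) (k - Max_mset P)"
    by (rule de1_partitions_splitE)
  then show "P \<in> (\<lambda>(m, R). add_mset m R) ` odd_top_splits k"
    unfolding odd_top_splits_def by force
next
  fix P assume "P \<in> (\<lambda>(m, R). add_mset m R) ` odd_top_splits k"
  then obtain m R where "P = add_mset m R" "(m, R) \<in> odd_top_splits k" by auto
  then show "P \<in> de1_partitions k"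
    using add_mset_in_de1_partitions_iff odd_top_splits_bound
    unfolding odd_top_splits_def by blast
qed

lemma repeated_top_eq_image:
  "{P \<in> de1_partitions k. count P (Max_mset P) \<noteq> 1} =
     (\<lambda>(m, R). add_mset m (add_mset m R)) ` odd_pair_splits k"
proof (intro set_eqI iffI)
  fix P assume P: "P \<in> {P \<in> de1_partitions k. count P (Max_mset P) \<noteq> 1}"
  define M where "M = Max_mset P"
  obtain R' where P_eq: "P = add_mset M R'" and "odd M" "M \<le> k"
    and R': "R' \<in> bounded_de_partitions M (k - M)"
    using P de1_partitions_splitE unfolding M_def by blast
  have "count P M \<noteq> 1"
    using P unfolding M_def by simp
  then have "M \<in># R'"
    unfolding P_eq by (simp add: not_in_iff)
  then obtain R where "R' = add_mset M R"
    by (metis multi_member_split)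
  with R' have "2 * M \<le> k" "R \<in> bounded_de_partitions M (k - 2 * M)"
    by (auto simp: add_mset_in_bounded_de_partitions_iff mult_2)
  with \<open>odd M\<close> P_eq \<open>R' = add_mset M R\<close>
  show "P \<in> (\<lambda>(m, R). add_mset m (add_mset m R)) ` odd_pair_splits k"
    unfolding odd_pair_splits_def by force
next
  fix P assume "P \<in> (\<lambda>(m, R). add_mset m (add_mset m R)) ` odd_pair_splits k"
  then obtain m R where P_eq: "P = add_mset m (add_mset m R)" and mR: "(m, R) \<in> odd_pair_splits k"
    by auto
  have bound: "\<forall>x\<in>#add_mset m R. x \<le> m"
    using odd_pair_splits_bound[OF mR] by simp
  have "add_mset m R \<in> bounded_de_partitions m (k - m)"
    using mR by (auto simp: odd_pair_splits_def add_mset_in_bounded_de_partitions_iff mult_2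
        intro: odd_pos)
  with mR have "P \<in> de1_partitions k"
    unfolding P_eq add_mset_in_de1_partitions_iff[OF bound] odd_pair_splits_def by simp
  moreover have "count P (Max_mset P) \<noteq> 1"
    unfolding P_eq Max_mset_add_mset_upper[OF bound] by simp
  ultimately show "P \<in> {P \<in> de1_partitions k. count P (Max_mset P) \<noteq> 1}"
    by simp
qed

lemma unique_top_without_predecessor_eq_image:
  "{Q \<in> de1_partitions (k + 2). count Q (Max_mset Q) = 1 \<and> Max_mset Q - 1 \<notin># Q} =
     (\<lambda>(m, R). add_mset (m + 2) R) ` odd_top_splits k"
proof (intro set_eqI iffI)
  fix Q assume Q: "Q \<in> {Q \<in> de1_partitions (k + 2). count Q (Max_mset Q) = 1 \<and> Max_mset Q - 1 \<notin># Q}"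
  define M where "M = Max_mset Q"
  obtain R where Q_eq: "Q = add_mset M R" and "odd M" "M \<le> k + 2"
    and R: "R \<in> bounded_de_partitions M (k + 2 - M)"
    using Q de1_partitions_splitE unfolding M_def by blast
  have "count Q M = 1" "M - 1 \<notin># Q"
    using Q unfolding M_def by simp_all
  then have "M \<notin># R" "M - 1 \<notin># R"
    unfolding Q_eq by (auto simp: not_in_iff split: if_splits)
  with R have R_bound: "R \<in> bounded_de_partitions (M - 2) (k + 2 - M)"
    using bounded_de_partitions_drop_bound by (metis diff_diff_left one_add_one)
  have "M \<noteq> 1"
    using bounded_de_partitions_0D[of R "k + 1"] R_bound by auto
  define m where "m = M - 2"
  from \<open>odd M\<close> \<open>M \<noteq> 1\<close> have "M = m + 2" "odd m"
    unfolding m_def by (auto elim: oddE)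
  with \<open>M \<le> k + 2\<close> Q_eq R_bound
  show "Q \<in> (\<lambda>(m, R). add_mset (m + 2) R) ` odd_top_splits k"
    unfolding odd_top_splits_def image_iff m_def[symmetric]
    by (intro bexI[of _ "(m, R)"]) auto
next
  fix Q assume "Q \<in> (\<lambda>(m, R). add_mset (m + 2) R) ` odd_top_splits k"
  then obtain m R where Q_eq: "Q = add_mset (m + 2) R" and mR: "(m, R) \<in> odd_top_splits k"
    by auto
  have bound: "\<forall>x\<in>#R. x \<le> m + 2"
    using odd_top_splits_bound[OF mR] by auto
  have "m + 2 \<notin># R" "m + 1 \<notin># R"
    using odd_top_splits_bound[OF mR] by auto
  have "Q \<in> de1_partitions (k + 2)"
    using mR bounded_de_partitions_mono[of R m "k - m" "m + 2"]
    unfolding Q_eq add_mset_in_de1_partitions_iff[OF bound] odd_top_splits_def by simp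
  moreover from \<open>m + 2 \<notin># R\<close> \<open>m + 1 \<notin># R\<close> have "count Q (m + 2) = 1" "m + 1 \<notin># Q"
    unfolding Q_eq by (simp_all add: not_in_iff)
  moreover have "Max_mset Q = m + 2"
    unfolding Q_eq by (rule Max_mset_add_mset_upper[OF bound])
  ultimately show "Q \<in> {Q \<in> de1_partitions (k + 2). count Q (Max_mset Q) = 1 \<and> Max_mset Q - 1 \<notin># Q}"
    by simp
qed

lemma unique_top_with_predecessor_eq_image:
  "{Q \<in> de1_partitions (k + 3). count Q (Max_mset Q) = 1 \<and> Max_mset Q - 1 \<in># Q} =
     (\<lambda>(m, R). add_mset (m + 2) (add_mset (m + 1) R)) ` odd_pair_splits k"
proof (intro set_eqI iffI)
  fix Q assume Q: "Q \<in> {Q \<in> de1_partitions (k + 3). count Q (Max_mset Q) = 1 \<and> Max_mset Q - 1 \<in># Q}"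
  define M where "M = Max_mset Q"
  obtain R' where Q_eq: "Q = add_mset M R'" and "odd M" "M \<le> k + 3"
    and R': "R' \<in> bounded_de_partitions M (k + 3 - M)"
    using Q de1_partitions_splitE unfolding M_def by blast
  have "count Q M = 1" "M - 1 \<in># Q"
    using Q unfolding M_def by simp_all
  with \<open>odd M\<close> have "M \<notin># R'" "M - 1 \<in># R'"
    unfolding Q_eq by (auto simp: not_in_iff split: if_splits elim: oddE)
  then obtain R where R'_eq: "R' = add_mset (M - 1) R"
    by (metis multi_member_split)
  with R' \<open>odd M\<close> have "0 < M - 1" "M - 1 \<notin># R" "M - 1 \<le> k + 3 - M"
    and R: "R \<in> bounded_de_partitions M (k + 3 - M - (M - 1))"
    by (auto simp: add_mset_in_bounded_de_partitions_iff)
  moreover have "M \<notin># R"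
    using \<open>M \<notin># R'\<close> R'_eq by simp
  ultimately have R_bound: "R \<in> bounded_de_partitions (M - 2) (k + 3 - M - (M - 1))"
    using bounded_de_partitions_drop_bound by (metis diff_diff_left one_add_one)
  define m where "m = M - 2"
  from \<open>odd M\<close> \<open>0 < M - 1\<close> have "M = m + 2" "odd m"
    unfolding m_def by (auto elim: oddE)
  moreover from \<open>M - 1 \<le> k + 3 - M\<close> \<open>M = m + 2\<close>
  have "2 * m \<le> k" "k + 3 - M - (M - 1) = k - 2 * m"
    by simp_all
  ultimately show "Q \<in> (\<lambda>(m, R). add_mset (m + 2) (add_mset (m + 1) R)) ` odd_pair_splits k"
    using Q_eq R'_eq R_bound unfolding odd_pair_splits_def image_iff m_def[symmetric]
    by (intro bexI[of _ "(m, R)"]) auto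
next
  fix Q assume "Q \<in> (\<lambda>(m, R). add_mset (m + 2) (add_mset (m + 1) R)) ` odd_pair_splits k"
  then obtain m R where Q_eq: "Q = add_mset (m + 2) (add_mset (m + 1) R)"
    and mR: "(m, R) \<in> odd_pair_splits k"
    by auto
  have bound: "\<forall>x\<in>#add_mset (m + 1) R. x \<le> m + 2"
    using odd_pair_splits_bound[OF mR] by auto
  have "m + 2 \<notin># R" "m + 1 \<notin># R"
    using odd_pair_splits_bound[OF mR] by auto
  have "add_mset (m + 1) R \<in> bounded_de_partitions (m + 2) (k + 1 - m)"
    using mR \<open>m + 1 \<notin># R\<close> bounded_de_partitions_mono[of R m "k - 2 * m" "m + 2"]
    by (auto simp: odd_pair_splits_def add_mset_in_bounded_de_partitions_iff mult_2)
  with mR have "Q \<in> de1_partitions (k + 3)"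
    unfolding Q_eq add_mset_in_de1_partitions_iff[OF bound] odd_pair_splits_def by simp
  moreover from \<open>m + 2 \<notin># R\<close> have "count Q (m + 2) = 1" "m + 1 \<in># Q"
    unfolding Q_eq by (simp_all add: not_in_iff)
  moreover have "Max_mset Q = m + 2"
    unfolding Q_eq by (rule Max_mset_add_mset_upper[OF bound])
  ultimately show "Q \<in> {Q \<in> de1_partitions (k + 3). count Q (Max_mset Q) = 1 \<and> Max_mset Q - 1 \<in># Q}"
    by simp
qed

lemma finite_partitions_of: "finite (partitions_of n)"
proof (rule finite_subset)
  show "partitions_of n \<subseteq> (\<Union>k\<le>n. multisets_of_size {..n} k)"
  proof
    fix P assume "P \<in> partitions_of n"
    then have pos: "\<forall>x\<in>#P. 0 < x" and sum: "sum_mset P = n"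
      unfolding partitions_of_def by auto
    have "size P \<le> sum_mset P"
      using pos by (induction P) auto
    moreover have "x \<le> sum_mset P" if "x \<in># P" for x
      using that by (induction P) auto
    ultimately show "P \<in> (\<Union>k\<le>n. multisets_of_size {..n} k)"
      using sum by (auto simp: multisets_of_size_def)
  qed
qed auto

lemma finite_de1_partitions: "finite (de1_partitions k)"
  using finite_partitions_of unfolding de1_partitions_def by simp

lemma card_eq_card_filter_add_card_filter_not:
  "finite A \<Longrightarrow> card A = card {x \<in> A. P x} + card {x \<in> A. \<not> P x}"
  by (subst card_Un_disjoint[symmetric]) (auto intro: arg_cong[where f = card])

lemma DE1_eq_DE3_add_card_repeated_top:
  "DE1 k = DE3 k + card {P \<in> de1_partitions k. count P (Max_mset P) \<noteq> 1}"
  unfolding DE1_eq_card DE3_eq_card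
  by (rule card_eq_card_filter_add_card_filter_not[OF finite_de1_partitions])

lemma DE3_eq_card_split_by_predecessor:
  "DE3 k = card {Q \<in> de1_partitions k. count Q (Max_mset Q) = 1 \<and> Max_mset Q - 1 \<notin># Q}
         + card {Q \<in> de1_partitions k. count Q (Max_mset Q) = 1 \<and> Max_mset Q - 1 \<in># Q}"
  unfolding DE3_eq_card
  using card_eq_card_filter_add_card_filter_not[of "{Q \<in> de1_partitions k. count Q (Max_mset Q) = 1}"
      "\<lambda>Q. Max_mset Q - 1 \<notin># Q"] finite_de1_partitions
  by simp

lemma card_unique_top_without_predecessor:
  "card {Q \<in> de1_partitions (k + 2). count Q (Max_mset Q) = 1 \<and> Max_mset Q - 1 \<notin># Q} = DE1 k"
proof -
  have "inj_on (\<lambda>(m, R). add_mset (m + 2) R) (odd_top_splits k)"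
    by (rule inj_on_add_mset_upper) (auto dest!: odd_top_splits_bound simp: inj_def)
  moreover have "inj_on (\<lambda>(m, R). add_mset m R) (odd_top_splits k)"
    by (rule inj_on_add_mset_upper) (auto dest!: odd_top_splits_bound simp: inj_def)
  ultimately show ?thesis
    unfolding unique_top_without_predecessor_eq_image
    unfolding DE1_eq_card de1_partitions_eq_image
    by (simp add: card_image)
qed

lemma card_unique_top_with_predecessor:
  "card {Q \<in> de1_partitions (k + 3). count Q (Max_mset Q) = 1 \<and> Max_mset Q - 1 \<in># Q} =
     card {P \<in> de1_partitions k. count P (Max_mset P) \<noteq> 1}"
proof -
  have "inj_on (\<lambda>(m, R). add_mset (m + 2) (add_mset (m + 1) R)) (odd_pair_splits k)"
    by (rule inj_on_add_mset_upper) (auto dest!: odd_pair_splits_bound simp: inj_def)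
  moreover have "inj_on (\<lambda>(m, R). add_mset m (add_mset m R)) (odd_pair_splits k)"
    by (rule inj_on_add_mset_upper) (auto dest!: odd_pair_splits_bound simp: inj_def)
  ultimately show ?thesis
    unfolding unique_top_with_predecessor_eq_image repeated_top_eq_image
    by (simp add: card_image)
qed

theorem corollary4:
  fixes n :: nat
  assumes "n > 1"
  shows "DE3 (n + 2) + DE3 (n - 1) = DE1 n + DE1 (n - 1)"
proof -
  from assms have "n + 2 = (n - 1) + 3"
    by simp
  then have "DE3 (n + 2) = DE1 n + card {P \<in> de1_partitions (n - 1). count P (Max_mset P) \<noteq> 1}"
    using DE3_eq_card_split_by_predecessor[of "n + 2"] card_unique_top_without_predecessor[of n]
      card_unique_top_with_predecessor[of "n - 1"]
    by simp
  then show ?thesis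
    using DE1_eq_DE3_add_card_repeated_top[of "n - 1"] by simp
qed

end
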